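(* Let $(\Gamma,\psi)$ be an $H$-asymptotic couple with asymptotic integration, and let $S$ be a nonempty convex subset of $\Gamma$ without a greatest element which has the yardstick property. Then $S$ is jammed if and only if $S^{\downarrow}=\Gamma^{<}$.
   Context: An asymptotic couple is a pair $(\Gamma,\psi)$ with $\Gamma$ an ordered abelian group and $\psi:\Gamma\setminus\{0\}\to\Gamma$ such that for all nonzero $\alpha,\beta$: $\alpha+\beta\ne0\Rightarrow\psi(\alpha+\beta)\ge\min(\psi(\alpha),\psi(\beta))$; $\psi(k\alpha)=\psi(\alpha)$ for $k\in\mathbb{Z}\setminus\{0\}$; $\alpha>0\Rightarrow\alpha+\psi(\alpha)>\psi(\beta)$. $H$-asymptotic: $0<\alpha\le\beta\Rightarrow\psi(\alpha)\ge\psi(\beta)$. Write $\gamma'=\gamma+\psi(\gamma)$. Asymptotic integration: every $\alpha\in\Gamma$ equals $\gamma'$ for some $\gamma\ne0$, necessarily unique, denoted $\int\alpha$. Contraction map: $\chi(\alpha)=\int\psi(\alpha)$ for $\alpha\ne0$, $\chi(0)=0$. Yardstick property of a nonempty convex $S$ without greatest element: there is $\beta\in S$ with $\gamma-\chi(\gamma)\in S$ for all $\gamma\in S$ with $\gamma>\beta$. $S^{\downarrow}=\{\delta\in\Gamma:\delta\le\sigma\text{ for some }\sigma\in S\}$, $\Gamma^{<}=\{\gamma\in\Gamma:\gamma<0\}$. A set $S\subseteq\Gamma$ is jammed if $S\ne\emptyset$, $S$ has no greatest element, and for every convex subgroup $\Delta\ne\{0\}$ of $\Gamma$ there is $\gamma_0\in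 S$ such that $\gamma_1-\gamma_0\in\Delta$ for every $\gamma_1\in S$ with $\gamma_1>\gamma_0$. *)

theory Defs
  imports Main
begin

(* Gamma is modelled as a type 'a of class linordered_ab_group_add (ordered abelian group);
   psi is a total function whose value at 0 is irrelevant (only used on nonzero arguments). *)

definition zsmul :: "int \<Rightarrow> 'a::ab_group_add \<Rightarrow> 'a" where
  "zsmul k a = (if 0 \<le> k then (((+) a) ^^ nat k) 0 else - ((((+) a) ^^ nat (- k)) 0))"

definition asymptotic_couple :: "('a::linordered_ab_group_add \<Rightarrow> 'a) \<Rightarrow> bool" where
  "asymptotic_couple \<psi> \<longleftrightarrow>
     (\<forall>\<alpha> \<beta>. \<alpha> \<noteq> 0 \<longrightarrow> \<beta> \<noteq> 0 \<longrightarrow> \<alpha> + \<beta> \<noteq> 0 \<longrightarrow> \<psi> (\<alpha> + \<beta>) \<ge> min (\<psi> \<alpha>) (\<psi> \<beta>)) \<and>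
     (\<forall>\<alpha> (k::int). \<alpha> \<noteq> 0 \<longrightarrow> k \<noteq> 0 \<longrightarrow> \<psi> (zsmul k \<alpha>) = \<psi> \<alpha>) \<and>
     (\<forall>\<alpha> \<beta>. \<alpha> \<noteq> 0 \<longrightarrow> \<beta> \<noteq> 0 \<longrightarrow> \<alpha> > 0 \<longrightarrow> \<alpha> + \<psi> \<alpha> > \<psi> \<beta>)"

definition H_asymptotic :: "('a::linordered_ab_group_add \<Rightarrow> 'a) \<Rightarrow> bool" where
  "H_asymptotic \<psi> \<longleftrightarrow> (\<forall>\<alpha> \<beta>. 0 < \<alpha> \<longrightarrow> \<alpha> \<le> \<beta> \<longrightarrow> \<psi> \<alpha> \<ge> \<psi> \<beta>)"

definition has_asymptotic_integration :: "('a::linordered_ab_group_add \<Rightarrow> 'a) \<Rightarrow> bool" where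
  "has_asymptotic_integration \<psi> \<longleftrightarrow> (\<forall>\<alpha>. \<exists>\<gamma>. \<gamma> \<noteq> 0 \<and> \<alpha> = \<gamma> + \<psi> \<gamma>)"

definition asym_int :: "('a::linordered_ab_group_add \<Rightarrow> 'a) \<Rightarrow> 'a \<Rightarrow> 'a" where
  "asym_int \<psi> \<alpha> = (THE \<gamma>. \<gamma> \<noteq> 0 \<and> \<alpha> = \<gamma> + \<psi> \<gamma>)"

definition contraction :: "('a::linordered_ab_group_add \<Rightarrow> 'a) \<Rightarrow> 'a \<Rightarrow> 'a" where
  "contraction \<psi> \<alpha> = (if \<alpha> = 0 then 0 else asym_int \<psi> (\<psi> \<alpha>))"

definition convex_set :: "'a::linorder set \<Rightarrow> bool" where
  "convex_set S \<longleftrightarrow> (\<forall>a\<in>S. \<forall>b\<in>S. \<forall>c. a \<le> c \<and> c \<le> b \<longrightarrow> c \<in> S)"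

definition no_greatest :: "'a::linorder set \<Rightarrow> bool" where
  "no_greatest S \<longleftrightarrow> (\<forall>a\<in>S. \<exists>b\<in>S. a < b)"

definition yardstick :: "('a::linordered_ab_group_add \<Rightarrow> 'a) \<Rightarrow> 'a set \<Rightarrow> bool" where
  "yardstick \<psi> S \<longleftrightarrow> (\<exists>\<beta>\<in>S. \<forall>\<gamma>\<in>S. \<gamma> > \<beta> \<longrightarrow> \<gamma> - contraction \<psi> \<gamma> \<in> S)"

definition downward_closure :: "'a::linorder set \<Rightarrow> 'a set" where
  "downward_closure S = {\<delta>. \<exists>\<sigma>\<in>S. \<delta> \<le> \<sigma>}"

definition convex_subgroup :: "'a::linordered_ab_group_add set \<Rightarrow> bool" where
  "convex_subgroup D \<longleftrightarrow> 0 \<in> D \<and> (\<forall>a\<in>D. \<forall>b\<in>D. a + b \<in> D) \<and> (\<forall>a\<in>D. - a \<in> D)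
     \<and> convex_set D"

definition jammed :: "'a::linordered_ab_group_add set \<Rightarrow> bool" where
  "jammed S \<longleftrightarrow> S \<noteq> {} \<and> no_greatest S \<and>
     (\<forall>D. convex_subgroup D \<and> D \<noteq> {0} \<longrightarrow>
        (\<exists>\<gamma>0\<in>S. \<forall>\<gamma>1\<in>S. \<gamma>1 > \<gamma>0 \<longrightarrow> \<gamma>1 - \<gamma>0 \<in> D))"

end

(* If S\<^sup>\<down> is the set of negative elements, then late elements of S are close to 0, so their
   differences fall into any given nontrivial convex subgroup.  Conversely, if S is jammed but has a
   nonnegative element or stays below some \<delta> < 0, then late elements \<gamma> of S satisfy |\<gamma>| \<ge> |d|
   for a fixed d \<noteq> 0, hence \<chi>(\<gamma>) \<le> \<chi>(d) < 0.  By the yardstick property both \<gamma> and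
   \<gamma> - \<chi>(\<gamma>) lie in S, so jamming puts \<chi>(\<gamma>), and by convexity \<chi>(d), into every nontrivial
   convex subgroup.  This fails for the convex subgroup generated by \<chi>(\<chi>(d)), because
   n |\<chi>(\<beta>)| < |\<beta>| for all n and all \<beta> \<noteq> 0. *)

theory Submission
  imports Defs
begin

definition nsmul :: "nat \<Rightarrow> 'a::monoid_add \<Rightarrow> 'a" where
  "nsmul n a = (((+) a) ^^ n) 0"

lemma nsmul_0 [simp]: "nsmul 0 a = 0"
  by (simp add: nsmul_def)

lemma nsmul_Suc [simp]: "nsmul (Suc n) a = a + nsmul n a"
  by (simp add: nsmul_def)

lemma nsmul_add: "nsmul (n + m) a = nsmul n a + nsmul m a"
  by (induction n) (simp_all add: add.assoc)

lemma zsmul_of_nat: "zsmul (int n) a = nsmul n a"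
  by (simp add: zsmul_def nsmul_def)

lemma zsmul_minus_one: "zsmul (- 1) a = - a"
  by (simp add: zsmul_def)

(* The class linordered_ab_group_add carries no abs operation. *)
definition abs_val :: "'a::linordered_ab_group_add \<Rightarrow> 'a" where
  "abs_val x = max x (- x)"

lemma abs_val_le_iff: "abs_val x \<le> y \<longleftrightarrow> x \<le> y \<and> - x \<le> y"
  by (simp add: abs_val_def)

lemma abs_val_ge_self: "x \<le> abs_val x"
  by (simp add: abs_val_def)

lemma abs_val_ge_minus_self: "- x \<le> abs_val x"
  by (simp add: abs_val_def)

lemma abs_val_of_nonneg: "0 \<le> x \<Longrightarrow> abs_val x = x"
  by (simp add: abs_val_def max_def)

lemma abs_val_of_nonpos: "x \<le> 0 \<Longrightarrow> abs_val x = - x"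
  by (simp add: abs_val_def max_def)

lemma abs_val_uminus [simp]: "abs_val (- x) = abs_val x"
  by (simp add: abs_val_def max.commute)

lemma abs_val_0 [simp]: "abs_val 0 = 0"
  by (simp add: abs_val_def)

lemma abs_val_eq_0_iff [simp]: "abs_val x = 0 \<longleftrightarrow> x = 0"
  by (cases "0 \<le> x") (auto simp: abs_val_of_nonneg abs_val_of_nonpos)

lemma abs_val_pos_iff [simp]: "0 < abs_val x \<longleftrightarrow> x \<noteq> 0"
  by (cases "0 \<le> x") (auto simp: abs_val_of_nonneg abs_val_of_nonpos)

lemma abs_val_nonneg: "0 \<le> abs_val x"
  by (auto simp: abs_val_def le_max_iff_disj)

lemma abs_val_add_le: "abs_val (a + b) \<le> abs_val a + abs_val b"
proof -
  have "- (a + b) = - a + - b"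
    by simp
  then show ?thesis
    by (simp only: abs_val_le_iff) (metis add_mono abs_val_ge_self abs_val_ge_minus_self)
qed

lemma abs_val_le_between:
  assumes "a \<le> c" "c \<le> b"
  shows "abs_val c \<le> abs_val a + abs_val b"
proof -
  have "c \<le> abs_val a + abs_val b"
    using assms(2) abs_val_ge_self[of b] abs_val_nonneg[of a] by (meson add_increasing order.trans)
  moreover have "- c \<le> abs_val a + abs_val b"
    using assms(1) abs_val_ge_minus_self[of a] abs_val_nonneg[of b]
    by (meson add_increasing2 neg_le_iff_le order.trans)
  ultimately show ?thesis
    by (simp add: abs_val_le_iff)
qed

lemma convex_subgroup_diff: "convex_subgroup D \<Longrightarrow> a \<in> D \<Longrightarrow> b \<in> D \<Longrightarrow> a - b \<in> D"
  unfolding convex_subgroup_def by (metis diff_conv_add_uminus)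

lemma convex_subgroup_between:
  "convex_subgroup D \<Longrightarrow> a \<in> D \<Longrightarrow> b \<in> D \<Longrightarrow> a \<le> c \<Longrightarrow> c \<le> b \<Longrightarrow> c \<in> D"
  unfolding convex_subgroup_def convex_set_def by blast

lemma convex_subgroup_ex_pos:
  assumes "convex_subgroup D" "D \<noteq> {0}"
  shows "\<exists>x\<in>D. 0 < x"
proof -
  have "0 \<in> D"
    using assms(1) by (simp add: convex_subgroup_def)
  then obtain x where "x \<in> D" "x \<noteq> 0"
    using assms(2) by blast
  moreover have "- x \<in> D"
    using assms(1) \<open>x \<in> D\<close> by (simp add: convex_subgroup_def)
  ultimately show ?thesis
    by (metis neg_0_less_iff_less linorder_neqE)
qed

definition generated_convex_subgroup :: "'a::linordered_ab_group_add \<Rightarrow> 'a set" where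
  "generated_convex_subgroup p = {x. \<exists>n. abs_val x \<le> nsmul n (abs_val p)}"

lemma mem_generated_convex_subgroup: "p \<in> generated_convex_subgroup p"
  unfolding generated_convex_subgroup_def by (auto intro!: exI[of _ 1])

lemma convex_subgroup_generated_convex_subgroup:
  "convex_subgroup (generated_convex_subgroup p)" (is "convex_subgroup ?D")
  unfolding convex_subgroup_def convex_set_def
proof (intro conjI ballI allI impI)
  show "0 \<in> ?D"
    unfolding generated_convex_subgroup_def by (auto intro!: exI[of _ 0])
next
  fix a b assume "a \<in> ?D" "b \<in> ?D"
  then obtain n m where "abs_val a \<le> nsmul n (abs_val p)" "abs_val b \<le> nsmul m (abs_val p)"
    unfolding generated_convex_subgroup_def by blast
  then have "abs_val (a + b) \<le> nsmul (n + m) (abs_val p)"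
    unfolding nsmul_add by (meson abs_val_add_le add_mono order.trans)
  then show "a + b \<in> ?D"
    unfolding generated_convex_subgroup_def by blast
next
  fix a assume "a \<in> ?D"
  then show "- a \<in> ?D"
    unfolding generated_convex_subgroup_def by simp
next
  fix a b c assume "a \<in> ?D" "b \<in> ?D" "a \<le> c \<and> c \<le> b"
  then obtain n m where "abs_val a \<le> nsmul n (abs_val p)" "abs_val b \<le> nsmul m (abs_val p)"
    unfolding generated_convex_subgroup_def by blast
  with \<open>a \<le> c \<and> c \<le> b\<close> have "abs_val c \<le> nsmul (n + m) (abs_val p)"
    unfolding nsmul_add by (meson abs_val_le_between add_mono order.trans)
  then show "c \<in> ?D"
    unfolding generated_convex_subgroup_def by blast
qed

lemma psi_uminus:
  assumes "asymptotic_couple \<psi>"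
  shows "\<psi> (- x) = \<psi> x"
  using assms zsmul_minus_one[of x] unfolding asymptotic_couple_def
  by (cases "x = 0") (simp, metis zero_neq_neg_one)

lemma psi_nsmul:
  assumes "asymptotic_couple \<psi>" "x \<noteq> 0" "n \<noteq> 0"
  shows "\<psi> (nsmul n x) = \<psi> x"
  using assms zsmul_of_nat[of n x] unfolding asymptotic_couple_def by (metis of_nat_eq_0_iff)

lemma psi_abs_val:
  assumes "asymptotic_couple \<psi>"
  shows "\<psi> (abs_val x) = \<psi> x"
  using psi_uminus[OF assms, of x]
  by (cases "0 \<le> x") (simp_all add: abs_val_of_nonneg abs_val_of_nonpos)

lemma psi_less_derivative:
  assumes "asymptotic_couple \<psi>" "0 < \<alpha>" "\<beta> \<noteq> 0"
  shows "\<psi> \<beta> < \<alpha> + \<psi> \<alpha>"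
  using assms unfolding asymptotic_couple_def by simp

lemma derivative_eq_psi_imp_neg:
  assumes "asymptotic_couple \<psi>" "\<alpha> \<noteq> 0" "\<gamma> \<noteq> 0" "\<psi> \<alpha> = \<gamma> + \<psi> \<gamma>"
  shows "\<gamma> < 0"
proof (rule ccontr)
  assume "\<not> \<gamma> < 0"
  with assms(3) have "0 < \<gamma>"
    by simp
  then have "\<psi> \<alpha> < \<gamma> + \<psi> \<gamma>"
    using psi_less_derivative assms(1,2) by blast
  with assms(4) show False
    by simp
qed

locale H_asymptotic_couple =
  fixes \<psi> :: "'a::linordered_ab_group_add \<Rightarrow> 'a"
  assumes asymptotic_couple: "asymptotic_couple \<psi>"
    and H_asymptotic: "H_asymptotic \<psi>"
begin

lemma psi_antimono_abs_val:
  assumes "x \<noteq> 0" "abs_val x \<le> abs_val y"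
  shows "\<psi> y \<le> \<psi> x"
  using H_asymptotic assms psi_abs_val[OF asymptotic_couple]
  unfolding H_asymptotic_def by (metis abs_val_pos_iff)

lemma derivative_strict_mono_neg:
  assumes "x < y" "y < 0"
  shows "x + \<psi> x < y + \<psi> y"
proof -
  have "abs_val y \<le> abs_val x"
    using assms by (simp add: abs_val_of_nonpos)
  then have "\<psi> x \<le> \<psi> y"
    using psi_antimono_abs_val[of y x] assms(2) by auto
  with assms(1) show ?thesis
    by (rule add_less_le_mono)
qed

end

locale H_asymptotic_couple_with_integration = H_asymptotic_couple +
  assumes asymptotic_integration: "has_asymptotic_integration \<psi>"
begin

lemma contraction_eqI:
  assumes "\<alpha> \<noteq> 0" "\<gamma> \<noteq> 0" "\<psi> \<alpha> = \<gamma> + \<psi> \<gamma>"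
  shows "contraction \<psi> \<alpha> = \<gamma>"
proof -
  have "\<gamma>' = \<gamma>" if "\<gamma>' \<noteq> 0" "\<psi> \<alpha> = \<gamma>' + \<psi> \<gamma>'" for \<gamma>'
  proof -
    have "\<gamma> < 0" "\<gamma>' < 0"
      using derivative_eq_psi_imp_neg[OF asymptotic_couple assms(1)] assms that by auto
    then show ?thesis
      using derivative_strict_mono_neg[of \<gamma> \<gamma>'] derivative_strict_mono_neg[of \<gamma>' \<gamma>] assms(3) that(2)
      by (metis less_irrefl linorder_neqE)
  qed
  then have "asym_int \<psi> (\<psi> \<alpha>) = \<gamma>"
    unfolding asym_int_def using assms(2,3) by blast
  with assms(1) show ?thesis
    by (simp add: contraction_def)
qed

lemma contraction_neg_derivative:
  assumes "\<alpha> \<noteq> 0"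
  shows "contraction \<psi> \<alpha> < 0" and "contraction \<psi> \<alpha> + \<psi> (contraction \<psi> \<alpha>) = \<psi> \<alpha>"
proof -
  obtain \<gamma> where "\<gamma> \<noteq> 0" "\<psi> \<alpha> = \<gamma> + \<psi> \<gamma>"
    using asymptotic_integration unfolding has_asymptotic_integration_def by blast
  with assms show "contraction \<psi> \<alpha> < 0" "contraction \<psi> \<alpha> + \<psi> (contraction \<psi> \<alpha>) = \<psi> \<alpha>"
    using contraction_eqI derivative_eq_psi_imp_neg[OF asymptotic_couple] by auto
qed

lemma contraction_mono:
  assumes "a \<noteq> 0" "b \<noteq> 0" "\<psi> a \<le> \<psi> b"
  shows "contraction \<psi> a \<le> contraction \<psi> b"
  using contraction_neg_derivative[OF assms(1)] contraction_neg_derivative[OF assms(2)] assms(3)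
    derivative_strict_mono_neg[of "contraction \<psi> b" "contraction \<psi> a"]
  by (metis not_le)

lemma nsmul_abs_val_contraction_less:
  assumes "\<alpha> \<noteq> 0"
  shows "nsmul n (abs_val (contraction \<psi> \<alpha>)) < abs_val \<alpha>"
proof (rule ccontr)
  let ?\<chi> = "contraction \<psi> \<alpha>"
  assume "\<not> ?thesis"
  then have le: "abs_val \<alpha> \<le> nsmul n (abs_val ?\<chi>)"
    by (simp add: not_less)
  with assms have "n \<noteq> 0"
    by (metis abs_val_pos_iff nsmul_0 not_le)
  moreover have "?\<chi> \<noteq> 0"
    using contraction_neg_derivative(1)[OF assms] by simp
  ultimately have "\<psi> (nsmul n (abs_val ?\<chi>)) = \<psi> ?\<chi>"
    by (simp add: psi_nsmul psi_abs_val asymptotic_couple)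
  moreover have "\<psi> (nsmul n (abs_val ?\<chi>)) \<le> \<psi> \<alpha>"
    using psi_antimono_abs_val[OF assms] le abs_val_ge_self order.trans by blast
  ultimately show False
    using contraction_neg_derivative[OF assms] by (metis add_less_same_cancel2 not_le)
qed

lemma exists_convex_subgroup_not_mem:
  assumes "(c::'a) \<noteq> 0"
  shows "\<exists>D. convex_subgroup D \<and> D \<noteq> {0} \<and> c \<notin> D"
proof (intro exI conjI)
  let ?D = "generated_convex_subgroup (contraction \<psi> c)"
  show "convex_subgroup ?D"
    by (rule convex_subgroup_generated_convex_subgroup)
  show "?D \<noteq> {0}"
    using mem_generated_convex_subgroup contraction_neg_derivative(1)[OF assms] by force
  show "c \<notin> ?D"
    using nsmul_abs_val_contraction_less[OF assms]
    unfolding generated_convex_subgroup_def by (simp add: not_le)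
qed

lemma jammed_yardstick_frequently_abs_val_less:
  assumes jam: "jammed S" and yard: "yardstick \<psi> S" and "d \<noteq> 0" "t \<in> S"
  shows "\<exists>\<gamma>\<in>S. t \<le> \<gamma> \<and> abs_val \<gamma> < abs_val d"
proof (rule ccontr)
  assume "\<not> ?thesis"
  then have large: "abs_val d \<le> abs_val \<gamma>" if "\<gamma> \<in> S" "t \<le> \<gamma>" for \<gamma>
    using that by (auto simp: not_less)
  obtain \<beta> where "\<beta> \<in> S" and \<beta>: "\<And>\<gamma>. \<gamma> \<in> S \<Longrightarrow> \<beta> < \<gamma> \<Longrightarrow> \<gamma> - contraction \<psi> \<gamma> \<in> S"
    using yard unfolding yardstick_def by blast
  have "contraction \<psi> d < 0"
    using contraction_neg_derivative(1)[OF \<open>d \<noteq> 0\<close>] .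
  then have "contraction \<psi> d \<noteq> 0"
    by simp
  then obtain D where D: "convex_subgroup D" "D \<noteq> {0}" "contraction \<psi> d \<notin> D"
    using exists_convex_subgroup_not_mem by blast
  then obtain \<gamma>\<^sub>0 where "\<gamma>\<^sub>0 \<in> S" and \<gamma>\<^sub>0: "\<And>\<gamma>. \<gamma> \<in> S \<Longrightarrow> \<gamma>\<^sub>0 < \<gamma> \<Longrightarrow> \<gamma> - \<gamma>\<^sub>0 \<in> D"
    using jam unfolding jammed_def by blast
  have "max \<gamma>\<^sub>0 (max \<beta> t) \<in> S"
    using \<open>\<gamma>\<^sub>0 \<in> S\<close> \<open>\<beta> \<in> S\<close> \<open>t \<in> S\<close> by (simp add: max_def)
  then obtain \<gamma> where "\<gamma> \<in> S" "max \<gamma>\<^sub>0 (max \<beta> t) < \<gamma>"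
    using jam unfolding jammed_def no_greatest_def by blast
  then have "\<gamma>\<^sub>0 < \<gamma>" "\<beta> < \<gamma>" "t < \<gamma>"
    by simp_all
  have "abs_val d \<le> abs_val \<gamma>"
    using large \<open>\<gamma> \<in> S\<close> \<open>t < \<gamma>\<close> by simp
  then have "\<gamma> \<noteq> 0" "\<psi> \<gamma> \<le> \<psi> d"
    using psi_antimono_abs_val \<open>d \<noteq> 0\<close> by (metis abs_val_pos_iff order_less_le_trans)+
  then have \<chi>_le: "contraction \<psi> \<gamma> \<le> contraction \<psi> d"
    using contraction_mono \<open>d \<noteq> 0\<close> by blast
  have "\<gamma> - contraction \<psi> \<gamma> \<in> S"
    using \<beta> \<open>\<gamma> \<in> S\<close> \<open>\<beta> < \<gamma>\<close> .
  moreover have "\<gamma>\<^sub>0 < \<gamma> - contraction \<psi> \<gamma>"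
    using add_strict_mono[OF \<open>\<gamma>\<^sub>0 < \<gamma>\<close> contraction_neg_derivative(1)[OF \<open>\<gamma> \<noteq> 0\<close>]]
    by (simp add: less_diff_eq)
  ultimately have "(\<gamma> - \<gamma>\<^sub>0) - ((\<gamma> - contraction \<psi> \<gamma>) - \<gamma>\<^sub>0) \<in> D"
    by (intro convex_subgroup_diff[OF D(1)] \<gamma>\<^sub>0 \<open>\<gamma> \<in> S\<close> \<open>\<gamma>\<^sub>0 < \<gamma>\<close>)
  then have "contraction \<psi> \<gamma> \<in> D"
    by simp
  moreover have "0 \<in> D"
    using D(1) by (simp add: convex_subgroup_def)
  ultimately have "contraction \<psi> d \<in> D"
    using convex_subgroup_between[OF D(1) _ _ \<chi>_le] \<open>contraction \<psi> d < 0\<close> less_imp_le by blast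
  with D(3) show False ..
qed

lemma downward_closure_eq_neg_if_jammed:
  assumes "jammed S" "yardstick \<psi> S"
  shows "downward_closure S = {\<gamma>. \<gamma> < 0}"
proof -
  have neg: "\<sigma> < 0" if "\<sigma> \<in> S" for \<sigma>
  proof (rule ccontr)
    assume "\<not> \<sigma> < 0"
    obtain t where "t \<in> S" "\<sigma> < t"
      using assms(1) \<open>\<sigma> \<in> S\<close> unfolding jammed_def no_greatest_def by blast
    with \<open>\<not> \<sigma> < 0\<close> have "0 < t"
      by simp
    then obtain \<gamma> where "t \<le> \<gamma>" "abs_val \<gamma> < abs_val t"
      using jammed_yardstick_frequently_abs_val_less[OF assms, of t t] \<open>t \<in> S\<close> by auto
    with \<open>0 < t\<close> show False
      by (simp add: abs_val_of_nonneg)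
  qed
  have cofinal: "\<exists>\<sigma>\<in>S. \<delta> \<le> \<sigma>" if "\<delta> < 0" for \<delta>
  proof (rule ccontr)
    assume "\<not> ?thesis"
    then have below: "\<sigma> < \<delta>" if "\<sigma> \<in> S" for \<sigma>
      using that by (auto simp: not_le)
    obtain t where "t \<in> S"
      using assms(1) unfolding jammed_def by blast
    then obtain \<gamma> where "\<gamma> \<in> S" "abs_val \<gamma> < abs_val \<delta>"
      using jammed_yardstick_frequently_abs_val_less[OF assms, of \<delta> t] \<open>\<delta> < 0\<close> by auto
    with below[OF \<open>\<gamma> \<in> S\<close>] \<open>\<delta> < 0\<close> show False
      by (simp add: abs_val_of_nonpos)
  qed
  show ?thesis
  proof (intro set_eqI iffI)
    fix x :: 'a assume "x \<in> downward_closure S"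
    then show "x \<in> {\<gamma>. \<gamma> < 0}"
      unfolding downward_closure_def using neg le_less_trans by blast
  next
    fix x :: 'a assume "x \<in> {\<gamma>. \<gamma> < 0}"
    then show "x \<in> downward_closure S"
      unfolding downward_closure_def using cofinal by simp
  qed
qed

end

lemma jammed_if_downward_closure_eq_neg:
  assumes "S \<noteq> {}" "no_greatest S" and down: "downward_closure S = {\<gamma>. \<gamma> < 0}"
  shows "jammed S"
  unfolding jammed_def
proof (intro conjI allI impI assms(1,2))
  fix D :: "'a set"
  assume "convex_subgroup D \<and> D \<noteq> {0}"
  then have D: "convex_subgroup D" "D \<noteq> {0}"
    by simp_all
  then obtain x where "x \<in> D" "0 < x"
    using convex_subgroup_ex_pos by blast
  then have "- x \<in> downward_closure S"
    using down by simp
  then obtain \<sigma> where "\<sigma> \<in> S" "- x \<le> \<sigma>"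
    unfolding downward_closure_def by blast
  have "\<gamma> - \<sigma> \<in> D" if "\<gamma> \<in> S" "\<sigma> < \<gamma>" for \<gamma>
  proof -
    have "\<gamma> \<in> downward_closure S"
      using \<open>\<gamma> \<in> S\<close> unfolding downward_closure_def by blast
    then have "\<gamma> < 0"
      using down by simp
    then have "\<gamma> - \<sigma> \<le> - \<sigma>"
      by (simp add: diff_le_eq)
    also have "- \<sigma> \<le> x"
      using \<open>- x \<le> \<sigma>\<close> by (simp add: minus_le_iff)
    finally have "\<gamma> - \<sigma> \<le> x" .
    moreover have "0 \<le> \<gamma> - \<sigma>"
      using \<open>\<sigma> < \<gamma>\<close> by simp
    moreover have "0 \<in> D"
      using D(1) by (simp add: convex_subgroup_def)
    ultimately show ?thesis
      using convex_subgroup_between[OF D(1) _ \<open>x \<in> D\<close>] by blast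
  qed
  with \<open>\<sigma> \<in> S\<close> show "\<exists>\<gamma>\<^sub>0\<in>S. \<forall>\<gamma>\<^sub>1\<in>S. \<gamma>\<^sub>0 < \<gamma>\<^sub>1 \<longrightarrow> \<gamma>\<^sub>1 - \<gamma>\<^sub>0 \<in> D"
    by blast
qed

theorem lemma3p17:
  fixes \<psi> :: "'a::linordered_ab_group_add \<Rightarrow> 'a" and S :: "'a set"
  assumes "asymptotic_couple \<psi>" and "H_asymptotic \<psi>" and "has_asymptotic_integration \<psi>"
    and "S \<noteq> {}" and "convex_set S" and "no_greatest S" and "yardstick \<psi> S"
  shows "jammed S \<longleftrightarrow> downward_closure S = {\<gamma>. \<gamma> < 0}"
proof -
  interpret H_asymptotic_couple_with_integration \<psi>
    using assms(1-3) by unfold_locales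
  show ?thesis
    using downward_closure_eq_neg_if_jammed[OF _ assms(7)]
      jammed_if_downward_closure_eq_neg[OF assms(4,6)] by blast
qed

end
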